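(* Let $M_{cc}$ be the one-state Turing machine defined below. The language $L_{cc}=\{x\in\{u,0,h\}^*\mid M_{cc}\text{ halts on input }x\}$ is not context-free.
   Context: A one-state Turing machine is a tuple $\langle \{q\}, \Sigma, \Gamma, q, H, \delta\rangle$ with the following components: a unique state $q$; an input alphabet $\Sigma$ not containing the blank symbol $\sqcup$; a tape alphabet $\Gamma\supseteq\Sigma\cup\{\sqcup\}$; a set of halting symbols $H\subseteq\Gamma$; and a transition function $\delta:\Gamma\setminus H\to\Gamma\times\{L,R\}$. The tape is infinite in both directions. On input $x$, the tape holds $x$ with blanks everywhere else, and the head starts on the leftmost symbol of $x$. At each step, if the scanned symbol is in $H$, the machine halts. Otherwise, with $\delta(a)=(b,D)$ for the scanned symbol $a$, it writes $b$ and moves one cell in direction $D$. The machine $M_{cc}$ is this kind of machine with $\Sigma=\{u,0,h\}$, $\Gamma=\{\sqcup,u,U,h,0,1,Z,C,B\}$, $H=\{h\}$, and transitions $\delta(u)=(U,R)$, $\delta(0)=(1,L)$, $\delta(U)=(C,R)$, $\delta(1)=(Z,R)$, $\delta(Z)=(0,L)$, $\delta(C)=(B,L)$, $\delta(B)=(C,R)$, $\delta(\sqcup)=(\sqcup,L)$. *)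

theory Defs
  imports Main
begin

type_synonym 't cfg_prods = "(nat \<times> (nat + 't) list) set"

inductive_set cfg_step :: "'t cfg_prods \<Rightarrow> ((nat + 't) list \<times> (nat + 't) list) set"
  for P :: "'t cfg_prods" where
  "(A, w) \<in> P \<Longrightarrow> (u @ [Inl A] @ v, u @ w @ v) \<in> cfg_step P"

definition cfg_lang :: "'t cfg_prods \<Rightarrow> nat \<Rightarrow> 't list set" where
  "cfg_lang P S = {w. ([Inl S], map Inr w) \<in> (cfg_step P)\<^sup>*}"

definition context_free :: "'t list set \<Rightarrow> bool" where
  "context_free L \<longleftrightarrow> (\<exists>P S. finite P \<and> L = cfg_lang P S)"

datatype tsym = Blank | Su | SU | Sh | S0 | S1 | SZ | SC | SB

datatype dir = L | R

datatype isym = Iu | I0 | Ih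

fun embed :: "isym \<Rightarrow> tsym" where
  "embed Iu = Su" | "embed I0 = S0" | "embed Ih = Sh"

text \<open>Halting symbols H = {h}; the transition function on the non-halting symbols.
  The value at Sh is irrelevant (never used, since the machine halts there).\<close>
fun delta :: "tsym \<Rightarrow> tsym \<times> dir" where
  "delta Su = (SU, R)"
| "delta S0 = (S1, L)"
| "delta SU = (SC, R)"
| "delta S1 = (SZ, R)"
| "delta SZ = (S0, L)"
| "delta SC = (SB, L)"
| "delta SB = (SC, R)"
| "delta Blank = (Blank, L)"
| "delta Sh = (Sh, R)"

type_synonym config = "(int \<Rightarrow> tsym) \<times> int"

definition init_config :: "isym list \<Rightarrow> config" where
  "init_config x = ((\<lambda>i. if 0 \<le> i \<and> i < int (length x) then embed (x ! nat i) else Blank), 0)"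

fun tm_step :: "config \<Rightarrow> config" where
  "tm_step (t, p) = (let (b, d) = delta (t p) in
     (t(p := b), if d = R then p + 1 else p - 1))"

definition halts :: "isym list \<Rightarrow> bool" where
  "halts x \<longleftrightarrow> (\<exists>n. let (t, p) = (tm_step ^^ n) (init_config x) in t p = Sh)"

definition L_cc :: "isym list set" where
  "L_cc = {x. halts x}"

end

theory Submission
  imports Defs
begin

text \<open>On input \<open>u\<^sup>a 0\<^sup>b h\<close> the machine first marks every \<open>u\<close>, then uses the \<open>0\<close>-block as a
  binary counter, least significant bit first: each mark is consumed by one increment, after which
  the head walks back through the consumed marks. If the counter fills up, i.e. \<open>2\<^sup>b \<le> a + 1\<close>,
  the head runs over its ones into \<open>h\<close>; otherwise the carry of the last increment walks off the
  left end of the tape into blank cells forever. So on words of this shape the machine halts iff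
  \<open>2\<^sup>b \<le> a + 1\<close>.

  A context-free language satisfies a pumping lemma in which, for any colouring of positions by
  finitely many colours, the ends of both pumped factors can be required to have equal colours.
  Colouring a position by the state reached by an automaton for \<open>u\<^sup>* 0\<^sup>* h\<close> keeps all pumped
  words of that shape. Pumping \<open>u\<^bsup>2\<^sup>b - 1\<^esup> 0\<^sup>b h\<close> then either removes \<open>u\<close>s without changing \<open>b\<close>, or
  adds a \<open>0\<close> while at most doubling the \<open>u\<close>s; both leave the halting region.\<close>

section \<open>Derivation forests and a coloured pumping lemma\<close>

text \<open>\<open>yields P n \<alpha> w\<close>: the sentential form \<open>\<alpha>\<close> derives \<open>w\<close> by a forest of parse trees
  all of height below \<open>n\<close>.\<close>

inductive yields :: "'t cfg_prods \<Rightarrow> nat \<Rightarrow> (nat + 't) list \<Rightarrow> 't list \<Rightarrow> bool" for P where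
  yields_Nil: "yields P n [] []"
| yields_Inr: "yields P n \<alpha> w \<Longrightarrow> yields P n (Inr a # \<alpha>) (a # w)"
| yields_Inl: "(A, \<beta>) \<in> P \<Longrightarrow> yields P m \<beta> u \<Longrightarrow> m < n \<Longrightarrow> yields P n \<alpha> w \<Longrightarrow>
    yields P n (Inl A # \<alpha>) (u @ w)"

lemma yields_mono: "yields P n \<alpha> w \<Longrightarrow> n \<le> n' \<Longrightarrow> yields P n' \<alpha> w"
  by (induction rule: yields.induct) (auto intro: yields.intros less_le_trans)

lemma yields_append: "yields P n \<alpha> u \<Longrightarrow> yields P n \<beta> w \<Longrightarrow> yields P n (\<alpha> @ \<beta>) (u @ w)"
proof (induction rule: yields.induct)
  case (yields_Inl A \<gamma> m u' n \<alpha> u)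
  then show ?case using yields.yields_Inl[of A \<gamma> P m u' n "\<alpha> @ \<beta>" "u @ w"] by simp
qed (auto intro: yields.intros)

lemma yields_map_Inr: "yields P 0 (map Inr w) w"
  by (induction w) (auto intro: yields.intros)

lemma yields_Inl_iff: "yields P n [Inl A] w \<longleftrightarrow> (\<exists>\<beta> m. (A, \<beta>) \<in> P \<and> yields P m \<beta> w \<and> m < n)"
proof
  assume "yields P n [Inl A] w"
  then obtain \<beta> m u w' where "(A, \<beta>) \<in> P" "yields P m \<beta> u" "m < n" "yields P n [] w'" "w = u @ w'"
    by cases auto
  moreover from \<open>yields P n [] w'\<close> have "w' = []" by cases
  ultimately show "\<exists>\<beta> m. (A, \<beta>) \<in> P \<and> yields P m \<beta> w \<and> m < n" by auto
next
  assume "\<exists>\<beta> m. (A, \<beta>) \<in> P \<and> yields P m \<beta> w \<and> m < n"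
  then show "yields P n [Inl A] w"
    using yields_Inl[OF _ _ _ yields_Nil, of A _ P _ w n] by auto
qed

lemma yields_append_split:
  "yields P n (\<alpha> @ \<beta>) w \<Longrightarrow> \<exists>u v. w = u @ v \<and> yields P n \<alpha> u \<and> yields P n \<beta> v"
proof (induction \<alpha> arbitrary: w)
  case Nil
  then show ?case using yields_Nil by fastforce
next
  case (Cons y \<alpha>)
  from Cons.prems show ?case
  proof cases
    case (yields_Inr \<alpha>' w' a)
    then have y: "y = Inr a" and w: "w = a # w'" and "yields P n (\<alpha> @ \<beta>) w'" by simp_all
    then obtain u v where "w' = u @ v" "yields P n \<alpha> u" "yields P n \<beta> v"
      using Cons.IH by blast
    then have "w = (a # u) @ v" "yields P n (y # \<alpha>) (a # u)"
      by (simp_all add: y w yields.yields_Inr)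
    then show ?thesis using \<open>yields P n \<beta> v\<close> by blast
  next
    case (yields_Inl A \<gamma> m u' \<alpha>' w')
    then have y: "y = Inl A" and w: "w = u' @ w'" and "yields P n (\<alpha> @ \<beta>) w'" by simp_all
    then obtain u v where "w' = u @ v" "yields P n \<alpha> u" "yields P n \<beta> v"
      using Cons.IH by blast
    then have "w = (u' @ u) @ v" "yields P n (y # \<alpha>) (u' @ u)"
      using yields_Inl by (simp_all add: y w yields.yields_Inl)
    then show ?thesis using \<open>yields P n \<beta> v\<close> by blast
  qed simp
qed

lemma rtrancl_cfg_step_context:
  "(\<alpha>, \<beta>) \<in> (cfg_step P)\<^sup>* \<Longrightarrow> (u @ \<alpha> @ v, u @ \<beta> @ v) \<in> (cfg_step P)\<^sup>*"
proof (induction rule: rtrancl_induct)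
  case (step \<beta> \<gamma>)
  from step.hyps(2) have "(u @ \<beta> @ v, u @ \<gamma> @ v) \<in> cfg_step P"
  proof cases
    case (1 A \<delta> u' v')
    then show ?thesis using cfg_step.intros[OF 1(3), of "u @ u'" "v' @ v"] by simp
  qed
  with step.IH show ?case by (rule rtrancl_into_rtrancl)
qed simp

lemma yields_of_derivation: "(\<alpha>, map Inr w) \<in> (cfg_step P)\<^sup>* \<Longrightarrow> \<exists>n. yields P n \<alpha> w"
proof (induction rule: converse_rtrancl_induct)
  case base
  then show ?case using yields_map_Inr by blast
next
  case (step \<alpha> \<beta>)
  from step.hyps(1) obtain u A v \<gamma> where \<alpha>: "\<alpha> = u @ Inl A # v" and \<beta>: "\<beta> = u @ \<gamma> @ v"
    and prod: "(A, \<gamma>) \<in> P" by cases auto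
  from step.IH obtain n where "yields P n (u @ \<gamma> @ v) w" unfolding \<beta> by blast
  then obtain w1 w23 where w: "w = w1 @ w23" and u: "yields P n u w1" and "yields P n (\<gamma> @ v) w23"
    using yields_append_split by blast
  then obtain w2 w3 where w23: "w23 = w2 @ w3" and \<gamma>: "yields P n \<gamma> w2" and v: "yields P n v w3"
    using yields_append_split by blast
  have "yields P (Suc n) (Inl A # v) (w2 @ w3)"
    using yields_Inl[OF prod \<gamma> lessI yields_mono[OF v]] by simp
  then have "yields P (Suc n) (u @ Inl A # v) w"
    unfolding w w23 using yields_append[OF yields_mono[OF u]] by simp
  then show ?case unfolding \<alpha> by blast
qed

lemma derivation_of_yields: "yields P n \<alpha> w \<Longrightarrow> (\<alpha>, map Inr w) \<in> (cfg_step P)\<^sup>*"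
proof (induction rule: yields.induct)
  case (yields_Inr n \<alpha> w a)
  then show ?case using rtrancl_cfg_step_context[of \<alpha> "map Inr w" P "[Inr a]" "[]"] by simp
next
  case (yields_Inl A \<beta> m u n \<alpha> w)
  have "(Inl A # \<alpha>, \<beta> @ \<alpha>) \<in> (cfg_step P)\<^sup>*"
    using cfg_step.intros[OF yields_Inl.hyps(1), of "[]" \<alpha>] by auto
  also have "(\<beta> @ \<alpha>, map Inr u @ \<alpha>) \<in> (cfg_step P)\<^sup>*"
    using rtrancl_cfg_step_context[OF yields_Inl.IH(1), of "[]" \<alpha>] by simp
  also have "(map Inr u @ \<alpha>, map Inr u @ map Inr w) \<in> (cfg_step P)\<^sup>*"
    using rtrancl_cfg_step_context[OF yields_Inl.IH(2), of "map Inr u" "[]"] by simp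
  finally show ?case by simp
qed simp

definition generates :: "'t cfg_prods \<Rightarrow> nat \<Rightarrow> 't list \<Rightarrow> bool" where
  "generates P A w \<longleftrightarrow> (\<exists>n. yields P n [Inl A] w)"

lemma cfg_lang_iff_generates: "w \<in> cfg_lang P S \<longleftrightarrow> generates P S w"
  unfolding cfg_lang_def generates_def using yields_of_derivation derivation_of_yields by fastforce

lemma generates_Domain: "generates P A w \<Longrightarrow> A \<in> Domain P"
  unfolding generates_def yields_Inl_iff by blast

definition gen_context :: "'t cfg_prods \<Rightarrow> nat \<Rightarrow> 't list \<Rightarrow> nat \<Rightarrow> 't list \<Rightarrow> bool" where
  "gen_context P A r B t \<longleftrightarrow> (\<forall>s. generates P B s \<longrightarrow> generates P A (r @ s @ t))"

lemma gen_context_refl: "gen_context P A [] A []"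
  by (simp add: gen_context_def)

lemma gen_context_trans:
  "gen_context P A r B t \<Longrightarrow> gen_context P B r' C t' \<Longrightarrow> gen_context P A (r @ r') C (t' @ t)"
  unfolding gen_context_def by (metis append_assoc)

lemma gen_context_power:
  assumes "gen_context P A v A x"
  shows "gen_context P A (concat (replicate k v)) A (concat (replicate k x))"
proof (induction k)
  case 0
  then show ?case by (simp add: gen_context_refl)
next
  case (Suc k)
  have "concat (replicate k x) @ x = x @ concat (replicate k x)"
    by (induction k) simp_all
  with gen_context_trans[OF assms Suc.IH] show ?case by simp
qed

lemma gen_context_of_production:
  assumes prod: "(A, \<beta> @ Inl C # \<gamma>) \<in> P" and r: "yields P m \<beta> r" and t: "yields P m \<gamma> t"
  shows "gen_context P A r C t"
  unfolding gen_context_def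
proof (intro allI impI)
  fix s
  assume "generates P C s"
  then obtain n where "yields P n [Inl C] s" unfolding generates_def by blast
  then have "yields P (max m n) [Inl C] s"
    by (rule yields_mono) simp
  moreover have "yields P (max m n) \<gamma> t"
    using t by (rule yields_mono) simp
  ultimately have "yields P (max m n) ([Inl C] @ \<gamma>) (s @ t)"
    by (rule yields_append)
  then have "yields P (max m n) (\<beta> @ Inl C # \<gamma>) (r @ s @ t)"
    using yields_append[OF yields_mono[OF r]] by simp
  with prod have "yields P (Suc (max m n)) [Inl A] (r @ s @ t)"
    using yields_Inl_iff by blast
  then show "generates P A (r @ s @ t)"
    unfolding generates_def by blast
qed

lemma yields_long_factor:
  "yields P n \<beta> w \<Longrightarrow> 1 \<le> M \<Longrightarrow> length \<beta> * M < length w \<Longrightarrow>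
   \<exists>\<beta>1 C \<beta>2 r s t. \<beta> = \<beta>1 @ Inl C # \<beta>2 \<and> yields P n \<beta>1 r \<and> yields P n [Inl C] s \<and>
     yields P n \<beta>2 t \<and> w = r @ s @ t \<and> M < length s"
proof (induction rule: yields.induct)
  case (yields_Inr n \<alpha> w a)
  then obtain \<beta>1 C \<beta>2 r s t where "\<alpha> = \<beta>1 @ Inl C # \<beta>2" "yields P n \<beta>1 r" "yields P n [Inl C] s"
    "yields P n \<beta>2 t" "w = r @ s @ t" "M < length s"
    by auto
  then show ?case
    by (intro exI[of _ "Inr a # \<beta>1"] exI[of _ C] exI[of _ \<beta>2] exI[of _ "a # r"] exI[of _ s] exI[of _ t])
      (simp add: yields.yields_Inr)
next
  case (yields_Inl A \<beta> m u n \<alpha> w)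
  show ?case
  proof (cases "M < length u")
    case True
    have "yields P n [Inl A] u"
      using yields_Inl.hyps yields_Inl_iff by blast
    with True yields_Inl.hyps(4) show ?thesis
      by (intro exI[of _ "[]"] exI[of _ A] exI[of _ \<alpha>] exI[of _ "[]"] exI[of _ u] exI[of _ w])
        (simp add: yields_Nil)
  next
    case False
    with yields_Inl.prems obtain \<beta>1 C \<beta>2 r s t where "\<alpha> = \<beta>1 @ Inl C # \<beta>2" "yields P n \<beta>1 r"
      "yields P n [Inl C] s" "yields P n \<beta>2 t" "w = r @ s @ t" "M < length s"
      using yields_Inl.IH(2) by fastforce
    with yields_Inl.hyps(1-3) show ?thesis
      by (intro exI[of _ "Inl A # \<beta>1"] exI[of _ C] exI[of _ \<beta>2] exI[of _ "u @ r"] exI[of _ s] exI[of _ t])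
        (simp add: yields.yields_Inl)
  qed
qed simp

definition max_rhs_length :: "'t cfg_prods \<Rightarrow> nat" where
  "max_rhs_length P = Max (insert 1 ((length \<circ> snd) ` P))"

lemma max_rhs_length_ge: "finite P \<Longrightarrow> (A, \<beta>) \<in> P \<Longrightarrow> length \<beta> \<le> max_rhs_length P"
  unfolding max_rhs_length_def by (rule Max_ge) force+

lemma max_rhs_length_pos: "finite P \<Longrightarrow> 1 \<le> max_rhs_length P"
  unfolding max_rhs_length_def by (rule Max_ge) auto

lemma yields_proper_context:
  assumes "yields P n [Inl A] w" "finite P" "1 \<le> M" "max_rhs_length P * M < length w"
  shows "\<exists>r D s t. gen_context P A r D t \<and> generates P D s \<and> w = r @ s @ t \<and> r @ t \<noteq> [] \<and>
    M < length s"
  using assms(1,4)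
proof (induction n arbitrary: A w rule: less_induct)
  case (less n)
  from less.prems(1) obtain \<beta> m where prod: "(A, \<beta>) \<in> P" and "yields P m \<beta> w" "m < n"
    using yields_Inl_iff by blast
  moreover have "length \<beta> * M < length w"
    using max_rhs_length_ge[OF assms(2) prod] less.prems(2) by (meson le_less_trans mult_le_mono1)
  ultimately obtain \<beta>1 C \<beta>2 r s t where \<beta>: "\<beta> = \<beta>1 @ Inl C # \<beta>2" and "yields P m \<beta>1 r"
    and C: "yields P m [Inl C] s" and "yields P m \<beta>2 t" and w: "w = r @ s @ t" and long: "M < length s"
    using yields_long_factor assms(3) by metis
  then have ctx: "gen_context P A r C t"
    using gen_context_of_production prod by metis
  show ?case
  proof (cases "r @ t = []")
    case False
    with ctx C w long show ?thesis unfolding generates_def by blast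
  next
    case True
    \<comment> \<open>a unit step \<open>A \<rightarrow> C\<close>: descend into the strictly lower tree of \<open>C\<close>\<close>
    with w less.prems(2) have "max_rhs_length P * M < length s" by simp
    with less.IH[OF \<open>m < n\<close> C] obtain r' D s' t' where
      "gen_context P C r' D t'" "generates P D s'" "s = r' @ s' @ t'" "r' @ t' \<noteq> []" "M < length s'"
      by blast
    with ctx True w show ?thesis
      using gen_context_trans[OF ctx] by fastforce
  qed
qed

definition pumpable :: "'t cfg_prods \<Rightarrow> (nat \<Rightarrow> 'c) \<Rightarrow> nat \<Rightarrow> 't list \<Rightarrow> nat \<Rightarrow> bool" where
  "pumpable P f A w i \<longleftrightarrow> (\<exists>r v s x t. w = r @ v @ s @ x @ t \<and> v @ x \<noteq> [] \<and>
     f (i + length r) = f (i + length (r @ v)) \<and>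
     f (i + length (r @ v @ s)) = f (i + length (r @ v @ s @ x)) \<and>
     (\<forall>k. generates P A (r @ concat (replicate k v) @ s @ concat (replicate k x) @ t)))"

lemma pumpable_of_loop:
  assumes "gen_context P A r B t" "gen_context P B v B x" "generates P B s" "v @ x \<noteq> []"
    "f (i + length r) = f (i + length (r @ v))"
    "f (i + length (r @ v @ s)) = f (i + length (r @ v @ s @ x))"
  shows "pumpable P f A (r @ v @ s @ x @ t) i"
  unfolding pumpable_def
proof (intro exI conjI allI)
  fix k
  show "generates P A (r @ concat (replicate k v) @ s @ concat (replicate k x) @ t)"
    using assms(1-3) gen_context_power unfolding gen_context_def by (metis append_assoc)
qed (use assms in auto)

lemma pumpable_in_context:
  assumes "gen_context P A r B t" "pumpable P f B s (i + length r)"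
  shows "pumpable P f A (r @ s @ t) i"
proof -
  from assms(2) obtain r' v s' x t' where s: "s = r' @ v @ s' @ x @ t'" and "v @ x \<noteq> []"
    "f (i + length r + length r') = f (i + length r + length (r' @ v))"
    "f (i + length r + length (r' @ v @ s')) = f (i + length r + length (r' @ v @ s' @ x))"
    and pumps: "\<forall>k. generates P B (r' @ concat (replicate k v) @ s' @ concat (replicate k x) @ t')"
    unfolding pumpable_def by blast
  moreover have "\<forall>k. generates P A ((r @ r') @ concat (replicate k v) @ s' @ concat (replicate k x) @ t' @ t)"
    using assms(1) pumps unfolding gen_context_def by (metis append_assoc)
  ultimately show ?thesis
    unfolding pumpable_def
    by (intro exI[of _ "r @ r'"] exI[of _ v] exI[of _ s'] exI[of _ x] exI[of _ "t' @ t"]) (simp add: add.assoc)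
qed

text \<open>A factor \<open>s\<close> of \<open>w\<close> generated by \<open>D\<close> inside a context is labelled by \<open>D\<close> and the colours at
  its two ends. Descending to a proper subcontext removes the current label from the set \<open>X\<close> of
  labels still to be avoided; meeting the removed label again closes a loop.\<close>

lemma pumpable_or_unlabelled_of_subfactor:
  assumes ctx1: "gen_context P A r1 D1 t1" and proper: "r1 @ t1 \<noteq> []" and w: "w = r1 @ s1 @ t1"
    and ctx2: "gen_context P D1 r D t" and gen: "generates P D s" and s1: "s1 = r @ s @ t"
    and label: "(D, f (i + length r1 + length r), f (i + length r1 + length (r @ s)))
      \<notin> X - {(A, f i, f (i + length w))}"
  shows "pumpable P f A w i \<or> (\<exists>r D s t. gen_context P A r D t \<and> generates P D s \<and> w = r @ s @ t \<and>
    (D, f (i + length r), f (i + length (r @ s))) \<notin> X)"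
proof -
  have ctx: "gen_context P A (r1 @ r) D (t @ t1)"
    using gen_context_trans[OF ctx1 ctx2] .
  have w': "w = (r1 @ r) @ s @ t @ t1"
    using w s1 by simp
  show ?thesis
  proof (cases "(D, f (i + length r1 + length r), f (i + length r1 + length (r @ s))) \<in> X")
    case False
    with ctx gen w' show ?thesis
      by (intro disjI2 exI[of _ "r1 @ r"] exI[of _ D] exI[of _ s] exI[of _ "t @ t1"]) (simp add: add.assoc)
  next
    case True
    with label have "D = A" "f (i + length (r1 @ r)) = f i"
      "f (i + length ((r1 @ r) @ s)) = f (i + length w)"
      by (auto simp: add.assoc)
    with ctx gen proper w' have "pumpable P f A ([] @ (r1 @ r) @ s @ (t @ t1) @ []) i"
      by (intro pumpable_of_loop[OF gen_context_refl]) auto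
    with w' show ?thesis
      by simp
  qed
qed

lemma pumpable_or_unlabelled_factor:
  assumes "finite P" "finite X" "generates P A w" "max_rhs_length P ^ card X < length w"
  shows "pumpable P f A w i \<or> (\<exists>r D s t. gen_context P A r D t \<and> generates P D s \<and> w = r @ s @ t \<and>
    (D, f (i + length r), f (i + length (r @ s))) \<notin> X)"
  using assms(2-4)
proof (induction X arbitrary: A w i rule: finite_psubset_induct)
  case (psubset X)
  define key where "key = (A, f i, f (i + length w))"
  show ?case
  proof (cases "key \<in> X")
    case False
    then show ?thesis
      using psubset.prems(1) gen_context_refl unfolding key_def
      by (intro disjI2 exI[of _ "[]"] exI[of _ A] exI[of _ w] exI[of _ "[]"]) simp
  next
    case True
    let ?K = "max_rhs_length P"
    have "card X = Suc (card (X - {key}))"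
      by (rule card_Suc_Diff1[OF psubset.hyps True, symmetric])
    then have "?K * ?K ^ card (X - {key}) < length w"
      using psubset.prems(2) by simp
    moreover obtain n where "yields P n [Inl A] w"
      using psubset.prems(1) unfolding generates_def by blast
    moreover have "1 \<le> ?K ^ card (X - {key})"
      using max_rhs_length_pos[OF assms(1)] by simp
    ultimately obtain r1 D1 s1 t1 where ctx1: "gen_context P A r1 D1 t1" and "generates P D1 s1"
      and w: "w = r1 @ s1 @ t1" and proper: "r1 @ t1 \<noteq> []" and "?K ^ card (X - {key}) < length s1"
      using yields_proper_context[OF _ assms(1)] by blast
    moreover have "X - {key} \<subset> X"
      using True by blast
    ultimately consider "pumpable P f D1 s1 (i + length r1)"
      | r D s t where "gen_context P D1 r D t" "generates P D s" "s1 = r @ s @ t"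
          "(D, f (i + length r1 + length r), f (i + length r1 + length (r @ s))) \<notin> X - {key}"
      using psubset.IH by blast
    then show ?thesis
    proof cases
      case 1
      then show ?thesis
        using pumpable_in_context[OF ctx1] w by blast
    next
      case 2
      then show ?thesis
        using pumpable_or_unlabelled_of_subfactor[OF ctx1 proper w] unfolding key_def by blast
    qed
  qed
qed

theorem cfg_lang_coloured_pumping:
  assumes "finite P"
  shows "\<exists>N. \<forall>w (f :: nat \<Rightarrow> 'c :: finite). w \<in> cfg_lang P S \<longrightarrow> N < length w \<longrightarrow>
    (\<exists>r v s x t. w = r @ v @ s @ x @ t \<and> v @ x \<noteq> [] \<and>
       f (length r) = f (length (r @ v)) \<and> f (length (r @ v @ s)) = f (length (r @ v @ s @ x)) \<and>
       (\<forall>k. r @ concat (replicate k v) @ s @ concat (replicate k x) @ t \<in> cfg_lang P S))"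
proof -
  let ?labels = "Domain P \<times> (UNIV :: 'c set) \<times> (UNIV :: 'c set)"
  show ?thesis
  proof (rule exI[of _ "max_rhs_length P ^ card ?labels"], intro allI impI)
    fix w and f :: "nat \<Rightarrow> 'c"
    assume "w \<in> cfg_lang P S" and long: "max_rhs_length P ^ card ?labels < length w"
    then have "generates P S w"
      by (simp add: cfg_lang_iff_generates)
    moreover have "finite ?labels"
      using assms by (simp add: finite_Domain)
    ultimately have "pumpable P f S w 0"
      using pumpable_or_unlabelled_factor[OF assms _ _ long, where f = f and i = 0] generates_Domain by blast
    then show "\<exists>r v s x t. w = r @ v @ s @ x @ t \<and> v @ x \<noteq> [] \<and>
         f (length r) = f (length (r @ v)) \<and> f (length (r @ v @ s)) = f (length (r @ v @ s @ x)) \<and>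
         (\<forall>k. r @ concat (replicate k v) @ s @ concat (replicate k x) @ t \<in> cfg_lang P S)"
      unfolding pumpable_def cfg_lang_iff_generates by auto
  qed
qed

section \<open>The machine on inputs \<open>u\<^sup>a 0\<^sup>b h\<close>\<close>

definition tape_of :: "tsym list \<Rightarrow> int \<Rightarrow> tsym" where
  "tape_of xs i = (if 0 \<le> i \<and> i < int (length xs) then xs ! nat i else Blank)"

lemma tape_of_at_length: "tape_of (xs @ c # ys) (int (length xs)) = c"
  by (simp add: tape_of_def)

lemma tape_of_negative: "i < 0 \<Longrightarrow> tape_of xs i = Blank"
  by (simp add: tape_of_def)

lemma tape_of_update: "(tape_of (xs @ c # ys))(int (length xs) := c') = tape_of (xs @ c' # ys)"
proof
  fix i
  show "((tape_of (xs @ c # ys))(int (length xs) := c')) i = tape_of (xs @ c' # ys) i"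
  proof (cases "i = int (length xs)")
    case False
    then have "0 \<le> i \<Longrightarrow> nat i \<noteq> length xs" by auto
    with False show ?thesis
      by (auto simp: tape_of_def nth_append nth_Cons split: nat.split)
  qed (simp add: tape_of_def)
qed

lemma init_config_eq: "init_config x = (tape_of (map embed x), 0)"
  unfolding init_config_def tape_of_def by (auto simp: fun_eq_iff)

definition scanned :: "config \<Rightarrow> tsym" where
  "scanned c = fst c (snd c)"

lemma halts_iff_scanned: "halts x \<longleftrightarrow> (\<exists>n. scanned ((tm_step ^^ n) (init_config x)) = Sh)"
  by (simp add: halts_def scanned_def split_beta)

definition reaches :: "config \<Rightarrow> config \<Rightarrow> bool" where
  "reaches c c' \<longleftrightarrow> (\<exists>k. (tm_step ^^ k) c = c' \<and> (\<forall>j<k. scanned ((tm_step ^^ j) c) \<noteq> Sh))"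

lemma funpow_add_apply: "(f ^^ (k + l)) x = (f ^^ l) ((f ^^ k) x)"
  by (induction l) simp_all

lemma reaches_refl: "reaches c c"
  unfolding reaches_def by (rule exI[of _ 0]) simp

lemma reaches_trans [trans]: "reaches c c' \<Longrightarrow> reaches c' c'' \<Longrightarrow> reaches c c''"
proof -
  assume "reaches c c'" "reaches c' c''"
  then obtain k l where k: "(tm_step ^^ k) c = c'" "\<forall>j<k. scanned ((tm_step ^^ j) c) \<noteq> Sh"
    and l: "(tm_step ^^ l) c' = c''" "\<forall>j<l. scanned ((tm_step ^^ j) c') \<noteq> Sh"
    unfolding reaches_def by blast
  have "scanned ((tm_step ^^ j) c) \<noteq> Sh" if "j < k + l" for j
  proof (cases "j < k")
    case False
    then have "(tm_step ^^ j) c = (tm_step ^^ (j - k)) c'"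
      using k funpow_add_apply[where f = tm_step and k = k and l = "j - k" and x = c] by simp
    with l False \<open>j < k + l\<close> show ?thesis by simp
  qed (use k in blast)
  moreover have "(tm_step ^^ (k + l)) c = c''"
    using k l by (simp add: funpow_add_apply)
  ultimately show "reaches c c''"
    unfolding reaches_def by blast
qed

lemma reaches_step:
  assumes "delta c = (c', d)" "c \<noteq> Sh"
  shows "reaches (tape_of (xs @ c # ys), int (length xs))
    (tape_of (xs @ c' # ys), if d = R then int (length xs) + 1 else int (length xs) - 1)"
  unfolding reaches_def using assms
  by (intro exI[of _ 1]) (simp add: scanned_def tape_of_at_length tape_of_update)

lemma reaches_sweep_right:
  assumes "delta c = (c', R)" "c \<noteq> Sh"
  shows "reaches (tape_of (xs @ replicate k c @ ys), int (length xs))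
    (tape_of (xs @ replicate k c' @ ys), int (length xs) + int k)"
proof (induction k arbitrary: xs)
  case (Suc k)
  have "reaches (tape_of (xs @ c # replicate k c @ ys), int (length xs))
      (tape_of (xs @ c' # replicate k c @ ys), int (length xs) + 1)"
    using reaches_step[OF assms] by simp
  moreover have "reaches (tape_of (xs @ c' # replicate k c @ ys), int (length xs) + 1)
      (tape_of (xs @ c' # replicate k c' @ ys), int (length xs) + 1 + int k)"
    using Suc.IH[of "xs @ [c']"] by (simp add: add.commute)
  ultimately show ?case
    using reaches_trans by (fastforce simp: add.assoc)
qed (simp add: reaches_refl)

lemma reaches_sweep_left:
  assumes "delta c = (c', L)" "c \<noteq> Sh"
  shows "reaches (tape_of (xs @ replicate k c @ ys), int (length xs) + int k - 1)
    (tape_of (xs @ replicate k c' @ ys), int (length xs) - 1)"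
proof (induction k arbitrary: ys)
  case (Suc k)
  have "reaches (tape_of (xs @ replicate k c @ c # ys), int (length xs) + int k)
      (tape_of (xs @ replicate k c @ c' # ys), int (length xs) + int k - 1)"
    using reaches_step[OF assms, of "xs @ replicate k c" ys] by simp
  moreover have "reaches (tape_of (xs @ replicate k c @ c' # ys), int (length xs) + int k - 1)
      (tape_of (xs @ replicate k c' @ c' # ys), int (length xs) - 1)"
    by (rule Suc.IH)
  ultimately show ?case
    using reaches_trans by (fastforce simp: replicate_app_Cons_same)
qed (simp add: reaches_refl)

lemma halts_if_reaches: "reaches (init_config x) c \<Longrightarrow> scanned c = Sh \<Longrightarrow> halts x"
  unfolding halts_iff_scanned reaches_def by blast

lemma tm_steps_left_of_tape: "p < 0 \<Longrightarrow> (tm_step ^^ k) (tape_of xs, p) = (tape_of xs, p - int k)"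
proof (induction k arbitrary: p)
  case (Suc k)
  have "tm_step (tape_of xs, p) = (tape_of xs, p - 1)"
    using tape_of_negative[OF Suc.prems] by (simp add: fun_upd_idem)
  then show ?case
    using Suc by (simp add: funpow_Suc_right del: funpow.simps)
qed simp

lemma not_halts_if_reaches_off_tape:
  assumes "reaches (init_config x) (tape_of xs, p)" "p < 0"
  shows "\<not> halts x"
proof
  assume "halts x"
  then obtain n where n: "scanned ((tm_step ^^ n) (init_config x)) = Sh"
    unfolding halts_iff_scanned by blast
  from assms(1) obtain k where k: "(tm_step ^^ k) (init_config x) = (tape_of xs, p)"
    and no_h: "\<forall>j<k. scanned ((tm_step ^^ j) (init_config x)) \<noteq> Sh"
    unfolding reaches_def by blast
  show False
  proof (cases "n < k")
    case False
    then have "(tm_step ^^ n) (init_config x) = (tm_step ^^ (n - k)) (tape_of xs, p)"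
      using k funpow_add_apply[where f = tm_step and k = k and l = "n - k"] by simp
    with n assms(2) show False
      by (simp add: tm_steps_left_of_tape scanned_def tape_of_negative)
  qed (use n no_h in blast)
qed

fun bit_sym :: "bool \<Rightarrow> tsym" where
  "bit_sym True = S1"
| "bit_sym False = S0"

text \<open>After the first sweep the tape reads \<open>U\<^sup>m C\<^sup>n bits h\<close>: \<open>m\<close> unconsumed and \<open>n\<close> consumed
  marks, followed by the former \<open>0\<close>-block read as a binary counter, least significant bit first.\<close>

definition counter_config :: "nat \<Rightarrow> nat \<Rightarrow> bool list \<Rightarrow> config" where
  "counter_config m n bs =
    (tape_of (replicate m SU @ replicate n SC @ map bit_sym bs @ [Sh]), int (m + n))"

text \<open>Ones become \<open>Z\<close> on the way right, the first zero becomes a one, and on the way back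
  the \<open>Z\<close>s revert to zeros and the consumed marks \<open>C\<close> become \<open>B\<close>.\<close>

lemma reaches_increment_return:
  "reaches (counter_config m n (replicate j True @ False # bs))
    (tape_of (replicate m SU @ replicate n SB @ replicate j S0 @ S1 # map bit_sym bs @ [Sh]), int m - 1)"
proof -
  let ?marks = "replicate m SU @ replicate n SC"
  let ?rest = "map bit_sym bs @ [Sh]"
  have "reaches (tape_of (?marks @ replicate j S1 @ S0 # ?rest), int (m + n))
      (tape_of (?marks @ replicate j SZ @ S0 # ?rest), int (m + n) + int j)"
    using reaches_sweep_right[of S1 SZ ?marks j "S0 # ?rest"] by (simp add: add.assoc)
  also have "reaches \<dots> (tape_of (?marks @ replicate j SZ @ S1 # ?rest), int (m + n) + int j - 1)"
    using reaches_step[of S0 S1 L "?marks @ replicate j SZ" ?rest] by (simp add: add.assoc)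
  also have "reaches \<dots> (tape_of (?marks @ replicate j S0 @ S1 # ?rest), int (m + n) - 1)"
    using reaches_sweep_left[of SZ S0 ?marks j "S1 # ?rest"] by (simp add: add.assoc)
  also have "reaches \<dots> (tape_of (replicate m SU @ replicate n SB @ replicate j S0 @ S1 # ?rest), int m - 1)"
    using reaches_sweep_left[of SC SB "replicate m SU" n "replicate j S0 @ S1 # ?rest"] by (simp add: add.assoc)
  finally show ?thesis
    unfolding counter_config_def by (simp add: add.assoc)
qed

lemma reaches_counter_tick:
  "reaches (counter_config (Suc m) n (replicate j True @ False # bs))
    (counter_config m (Suc n) (replicate j False @ True # bs))"
proof -
  let ?bits = "replicate j S0 @ S1 # map bit_sym bs @ [Sh]"
  have "reaches (counter_config (Suc m) n (replicate j True @ False # bs))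
      (tape_of (replicate m SU @ SU # replicate n SB @ ?bits), int m)"
    using reaches_increment_return[of "Suc m" n j bs] by (simp add: replicate_app_Cons_same)
  also have "reaches \<dots> (tape_of (replicate m SU @ SC # replicate n SB @ ?bits), int m + 1)"
    using reaches_step[of SU SC R "replicate m SU" "replicate n SB @ ?bits"] by simp
  also have "reaches \<dots> (tape_of (replicate m SU @ SC # replicate n SC @ ?bits), int m + 1 + int n)"
    using reaches_sweep_right[of SB SC "replicate m SU @ [SC]" n ?bits] by (simp add: add.commute)
  finally show ?thesis
    unfolding counter_config_def by (simp add: add.commute add.left_commute)
qed

fun bin_val :: "bool list \<Rightarrow> nat" where
  "bin_val [] = 0"
| "bin_val (b # bs) = of_bool b + 2 * bin_val bs"

lemma bin_val_increment:
  "bin_val (replicate j False @ True # bs) = bin_val (replicate j True @ False # bs) + 1"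
  by (induction j) simp_all

lemma bin_val_replicate_False: "bin_val (replicate k False) = 0"
  by (induction k) simp_all

lemma bin_val_replicate_True: "bin_val (replicate k True) + 1 = 2 ^ k"
  by (induction k) simp_all

lemma bin_val_less: "bin_val bs < 2 ^ length bs"
  by (induction bs) simp_all

lemma bin_val_succ_less_iff: "bin_val bs + 1 < 2 ^ length bs \<longleftrightarrow> False \<in> set bs"
proof
  assume less: "bin_val bs + 1 < 2 ^ length bs"
  show "False \<in> set bs"
  proof (rule ccontr)
    assume "False \<notin> set bs"
    then have "bs = replicate (length bs) True"
      by (metis (full_types) replicate_length_same)
    with less show False
      by (metis bin_val_replicate_True less_irrefl)
  qed
next
  show "False \<in> set bs \<Longrightarrow> bin_val bs + 1 < 2 ^ length bs"
  proof (induction bs)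
    case (Cons b bs)
    then show ?case
      using bin_val_less[of bs] by (cases b) auto
  qed simp
qed

lemma split_first_False:
  assumes "False \<in> set bs"
  obtains j bs' where "bs = replicate j True @ False # bs'"
proof -
  obtain ys bs' where "bs = ys @ False # bs'" "False \<notin> set ys"
    using split_list_first[OF assms] by blast
  moreover from \<open>False \<notin> set ys\<close> have "ys = replicate (length ys) True"
    by (metis (full_types) replicate_length_same)
  ultimately show thesis
    using that by metis
qed

lemma reaches_counter_ticks:
  "bin_val bs + N < 2 ^ length bs \<Longrightarrow>
    \<exists>bs'. reaches (counter_config (m + N) n bs) (counter_config m (n + N) bs') \<and>
      length bs' = length bs \<and> bin_val bs' = bin_val bs + N"
proof (induction N arbitrary: n bs)
  case 0
  show ?case
    by (intro exI[of _ bs]) (simp add: reaches_refl)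
next
  case (Suc N)
  then have "bin_val bs + 1 < 2 ^ length bs"
    by linarith
  then have "False \<in> set bs"
    using bin_val_succ_less_iff by blast
  then obtain j rest where bs: "bs = replicate j True @ False # rest"
    by (rule split_first_False)
  let ?bs1 = "replicate j False @ True # rest"
  have "reaches (counter_config (m + Suc N) n bs) (counter_config (m + N) (Suc n) ?bs1)"
    unfolding bs by (simp add: reaches_counter_tick)
  moreover have "bin_val ?bs1 = bin_val bs + 1" "length ?bs1 = length bs"
    unfolding bs by (simp_all add: bin_val_increment)
  moreover from this have "bin_val ?bs1 + N < 2 ^ length ?bs1"
    using Suc.prems by simp
  then obtain bs' where "reaches (counter_config (m + N) (Suc n) ?bs1) (counter_config m (Suc n + N) bs')"
    "length bs' = length ?bs1" "bin_val bs' = bin_val ?bs1 + N"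
    using Suc.IH by blast
  ultimately show ?case
    using reaches_trans by fastforce
qed

definition input_word :: "nat \<Rightarrow> nat \<Rightarrow> isym list" where
  "input_word a b = replicate a Iu @ replicate b I0 @ [Ih]"

lemma reaches_counter_config:
  "reaches (init_config (input_word a b)) (counter_config a 0 (replicate b False))"
  using reaches_sweep_right[of Su SU "[]" a "replicate b S0 @ [Sh]"]
  by (simp add: init_config_eq input_word_def counter_config_def)

lemma halts_input_word:
  assumes "2 ^ b \<le> a + 1"
  shows "halts (input_word a b)"
proof -
  obtain m where a: "a = m + (2 ^ b - 1)"
    using assms by (metis add.commute le_add_diff_inverse2 le_diff_conv)
  moreover have "bin_val (replicate b False) + (2 ^ b - 1) < 2 ^ length (replicate b False)"
    by (simp add: bin_val_replicate_False)
  ultimately obtain bs where ticks: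
    "reaches (counter_config a 0 (replicate b False)) (counter_config m (2 ^ b - 1) bs)"
    and len: "length bs = b" and val: "bin_val bs = 2 ^ b - 1"
    using reaches_counter_ticks[of "replicate b False" "2 ^ b - 1" m 0] by auto
  \<comment> \<open>the counter is full: the head runs over its ones onto the \<open>h\<close>\<close>
  have "False \<notin> set bs"
    using bin_val_succ_less_iff[of bs] len val by simp
  then have "bs = replicate b True"
    using len by (metis (full_types) replicate_length_same)
  define pre where "pre = replicate m SU @ replicate (2 ^ b - 1) SC"
  have "reaches (init_config (input_word a b)) (counter_config m (2 ^ b - 1) (replicate b True))"
    using reaches_trans[OF reaches_counter_config ticks] \<open>bs = replicate b True\<close> a by simp
  also have "reaches \<dots> (tape_of (pre @ replicate b SZ @ [Sh]), int (length pre) + int b)"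
    using reaches_sweep_right[of S1 SZ pre b "[Sh]"] by (simp add: counter_config_def pre_def)
  finally have "reaches (init_config (input_word a b))
      (tape_of (pre @ replicate b SZ @ [Sh]), int (length pre) + int b)" .
  moreover have "scanned (tape_of (pre @ replicate b SZ @ [Sh]), int (length pre) + int b) = Sh"
    using tape_of_at_length[of "pre @ replicate b SZ" Sh "[]"] by (simp add: scanned_def)
  ultimately show "halts (input_word a b)"
    by (rule halts_if_reaches)
qed

lemma not_halts_input_word:
  assumes "a + 1 < 2 ^ b"
  shows "\<not> halts (input_word a b)"
proof -
  from assms have "bin_val (replicate b False) + a < 2 ^ length (replicate b False)"
    by (simp add: bin_val_replicate_False)
  then obtain bs where "reaches (counter_config a 0 (replicate b False)) (counter_config 0 a bs)"
    and "length bs = b" "bin_val bs = a"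
    using reaches_counter_ticks[of "replicate b False" a 0 0] by (force simp: bin_val_replicate_False)
  \<comment> \<open>the counter is not full: the carry returns past the left end of the tape\<close>
  moreover from this assms obtain j rest where "bs = replicate j True @ False # rest"
    by (metis bin_val_succ_less_iff split_first_False)
  ultimately have "reaches (init_config (input_word a b)) (counter_config 0 a (replicate j True @ False # rest))"
    using reaches_counter_config reaches_trans by metis
  then have "reaches (init_config (input_word a b))
      (tape_of (replicate a SB @ replicate j S0 @ S1 # map bit_sym rest @ [Sh]), - 1)"
    using reaches_trans[OF _ reaches_increment_return[of 0 a j rest]] by simp
  then show "\<not> halts (input_word a b)"
    by (rule not_halts_if_reaches_off_tape) simp
qed

section \<open>Non-context-freeness\<close>

lemma foldl_concat_replicate_fixpoint:
  "foldl g p u = p \<Longrightarrow> foldl g p (concat (replicate k u)) = p"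
  by (induction k) simp_all

lemma foldl_pump:
  assumes "foldl g q (r @ v) = foldl g q r" "foldl g q (r @ v @ s @ x) = foldl g q (r @ v @ s)"
  shows "foldl g q (r @ concat (replicate k v) @ s @ concat (replicate k x) @ t) =
    foldl g q (r @ v @ s @ x @ t)"
proof -
  define p where "p = foldl g q r"
  define p' where "p' = foldl g p s"
  have v: "foldl g p v = p" and x: "foldl g p' x = p'"
    using assms unfolding p_def p'_def by simp_all
  show ?thesis
    using foldl_concat_replicate_fixpoint[OF v] foldl_concat_replicate_fixpoint[OF x]
    by (simp flip: p_def p'_def add: v x)
qed

datatype shape = Units | Zeros | Accepted | Rejected

instance shape :: finite
proof
  have "UNIV = {Units, Zeros, Accepted, Rejected}"
    using shape.exhaust by blast
  then show "finite (UNIV :: shape set)"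
    by (metis finite.emptyI finite.insertI)
qed

fun shape_step :: "shape \<Rightarrow> isym \<Rightarrow> shape" where
  "shape_step Units Iu = Units"
| "shape_step Units I0 = Zeros"
| "shape_step Zeros I0 = Zeros"
| "shape_step Units Ih = Accepted"
| "shape_step Zeros Ih = Accepted"
| "shape_step _ _ = Rejected"

lemma foldl_shape_step_Rejected: "foldl shape_step Rejected w = Rejected"
  by (induction w) simp_all

lemma foldl_shape_step_Accepted: "foldl shape_step Accepted w = Accepted \<longleftrightarrow> w = []"
  by (cases w) (simp_all add: foldl_shape_step_Rejected)

lemma foldl_shape_step_Zeros:
  "foldl shape_step Zeros w = Accepted \<Longrightarrow> \<exists>n. w = replicate n I0 @ [Ih]"
proof (induction w)
  case (Cons c w)
  then show ?case
    by (cases c) (auto simp: foldl_shape_step_Rejected foldl_shape_step_Accepted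
      intro: exI[of _ 0] exI[of _ "Suc _"])
qed simp

lemma input_word_if_shape_Accepted:
  "foldl shape_step Units w = Accepted \<Longrightarrow> \<exists>a b. w = input_word a b"
proof (induction w)
  case (Cons c w)
  show ?case
  proof (cases c)
    case Iu
    with Cons obtain a b where "w = input_word a b" by auto
    with Iu show ?thesis
      by (intro exI[of _ "Suc a"] exI[of _ b]) (simp add: input_word_def)
  next
    case I0
    with Cons.prems obtain n where "w = replicate n I0 @ [Ih]"
      using foldl_shape_step_Zeros by auto
    with I0 show ?thesis
      by (intro exI[of _ 0] exI[of _ "Suc n"]) (simp add: input_word_def)
  next
    case Ih
    with Cons.prems show ?thesis
      by (intro exI[of _ 0] exI[of _ 0]) (simp add: input_word_def foldl_shape_step_Accepted)
  qed
qed simp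

lemma shape_input_word: "foldl shape_step Units (input_word a b) = Accepted"
proof -
  have "foldl shape_step Zeros (replicate b I0) = Zeros" for b
    by (induction b) simp_all
  moreover have "foldl shape_step Units (replicate a Iu) = Units"
    by (induction a) simp_all
  ultimately show ?thesis
    by (cases b) (simp_all add: input_word_def)
qed

lemma count_list_replicate: "count_list (replicate n c) c' = (if c = c' then n else 0)"
  by (induction n) auto

lemma count_list_input_word:
  "count_list (input_word a b) Iu = a" "count_list (input_word a b) I0 = b"
  "count_list (input_word a b) Ih = 1"
  by (simp_all add: input_word_def count_list_replicate)

lemma pumped_exponents_not_halting:
  fixes a0 b0 a2 b2 cu cz :: nat
  assumes "cu \<noteq> 0 \<or> cz \<noteq> 0" and a0: "a0 + cu = 2 ^ b - 1" and "b0 + cz = b"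
    and a2: "a2 = 2 ^ b - 1 + cu" and b2: "b2 = b + cz"
  shows "a0 + 1 < 2 ^ b0 \<or> a2 + 1 < 2 ^ b2"
proof -
  have "0 < (2::nat) ^ b"
    by simp
  show ?thesis
  proof (cases "cz = 0")
    case True
    \<comment> \<open>pumping down removes units but no zeros\<close>
    with assms \<open>0 < 2 ^ b\<close> have "a0 + 1 < 2 ^ b" "b0 = b"
      by linarith+
    then show ?thesis
      by simp
  next
    case False
    \<comment> \<open>pumping up at most doubles the units but at least doubles the counter range\<close>
    have "(2::nat) ^ (b + 1) \<le> 2 ^ b2"
      using False b2 by (intro power_increasing) auto
    then have "2 * 2 ^ b \<le> (2::nat) ^ b2"
      by simp
    with a0 a2 \<open>0 < 2 ^ b\<close> have "a2 + 1 < 2 ^ b2"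
      by linarith
    then show ?thesis ..
  qed
qed

lemma pumped_input_word_not_in_L_cc:
  assumes w: "r @ v @ s @ x @ t = input_word (2 ^ b - 1) b" and "v @ x \<noteq> []"
    and shape0: "foldl shape_step Units (r @ s @ t) = Accepted"
    and shape2: "foldl shape_step Units (r @ v @ v @ s @ x @ x @ t) = Accepted"
  shows "r @ s @ t \<notin> L_cc \<or> r @ v @ v @ s @ x @ x @ t \<notin> L_cc"
proof -
  let ?c = "count_list (v @ x)"
  obtain a0 b0 where w0: "r @ s @ t = input_word a0 b0"
    using input_word_if_shape_Accepted[OF shape0] by blast
  obtain a2 b2 where w2: "r @ v @ v @ s @ x @ x @ t = input_word a2 b2"
    using input_word_if_shape_Accepted[OF shape2] by blast
  have count0: "count_list (r @ s @ t) c + ?c c = count_list (input_word (2 ^ b - 1) b) c" for c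
    unfolding w[symmetric] by simp
  have count2: "count_list (r @ v @ v @ s @ x @ x @ t) c =
      count_list (input_word (2 ^ b - 1) b) c + ?c c" for c
    unfolding w[symmetric] by simp
  have "?c Ih = 0"
    using count2[of Ih] unfolding w2 by (simp add: count_list_input_word)
  moreover obtain c where "c \<in> set (v @ x)"
    using \<open>v @ x \<noteq> []\<close> by (meson ex_in_conv set_empty)
  then have "?c c \<noteq> 0"
    by (simp add: count_list_0_iff)
  ultimately have "?c Iu \<noteq> 0 \<or> ?c I0 \<noteq> 0"
    by (cases c) auto
  moreover have "a0 + ?c Iu = 2 ^ b - 1" "b0 + ?c I0 = b"
    using count0[of Iu] count0[of I0] unfolding w0 by (simp_all add: count_list_input_word)
  moreover have "a2 = 2 ^ b - 1 + ?c Iu" "b2 = b + ?c I0"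
    using count2[of Iu] count2[of I0] unfolding w2 by (simp_all add: count_list_input_word)
  ultimately have "a0 + 1 < 2 ^ b0 \<or> a2 + 1 < 2 ^ b2"
    by (rule pumped_exponents_not_halting)
  then show ?thesis
    using not_halts_input_word w0 w2 unfolding L_cc_def by auto
qed

lemma input_word_not_colour_pumpable:
  assumes w: "input_word (2 ^ b - 1) b = r @ v @ s @ x @ t" and "v @ x \<noteq> []"
    and colours: "foldl shape_step Units (r @ v) = foldl shape_step Units r"
      "foldl shape_step Units (r @ v @ s @ x) = foldl shape_step Units (r @ v @ s)"
  shows "\<exists>k. r @ concat (replicate k v) @ s @ concat (replicate k x) @ t \<notin> L_cc"
proof -
  have "foldl shape_step Units (r @ concat (replicate k v) @ s @ concat (replicate k x) @ t) = Accepted"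
    for k
    using foldl_pump[OF colours] shape_input_word w by metis
  from this[of 0] this[of 2] have "r @ s @ t \<notin> L_cc \<or> r @ v @ v @ s @ x @ x @ t \<notin> L_cc"
    using pumped_input_word_not_in_L_cc[OF w[symmetric] \<open>v @ x \<noteq> []\<close>] by (simp add: numeral_2_eq_2)
  then show ?thesis
  proof
    assume "r @ s @ t \<notin> L_cc"
    then show ?thesis
      by (intro exI[of _ 0]) simp
  next
    assume "r @ v @ v @ s @ x @ x @ t \<notin> L_cc"
    then show ?thesis
      by (intro exI[of _ 2]) (simp add: numeral_2_eq_2)
  qed
qed

theorem theorem3:
  shows "\<not> context_free L_cc"
proof
  assume "context_free L_cc"
  then obtain P S where "finite P" and L: "L_cc = cfg_lang P S"
    unfolding context_free_def by blast
  have "\<exists>N. \<forall>w (f :: nat \<Rightarrow> shape). w \<in> L_cc \<longrightarrow> N < length w \<longrightarrow>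
    (\<exists>r v s x t. w = r @ v @ s @ x @ t \<and> v @ x \<noteq> [] \<and>
      f (length r) = f (length (r @ v)) \<and> f (length (r @ v @ s)) = f (length (r @ v @ s @ x)) \<and>
      (\<forall>k. r @ concat (replicate k v) @ s @ concat (replicate k x) @ t \<in> L_cc))"
    (is "\<exists>N. ?pumping N")
    unfolding L by (rule cfg_lang_coloured_pumping[OF \<open>finite P\<close>])
  then obtain N where pump: "?pumping N" ..
  define w where "w = input_word (2 ^ N - 1) N"
  have "w \<in> L_cc" "N < length w"
    using halts_input_word by (simp_all add: w_def L_cc_def input_word_def)
  then obtain r v s x t where w: "w = r @ v @ s @ x @ t" and "v @ x \<noteq> []"
    and "foldl shape_step Units (take (length r) w) = foldl shape_step Units (take (length (r @ v)) w)"
      "foldl shape_step Units (take (length (r @ v @ s)) w) =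
        foldl shape_step Units (take (length (r @ v @ s @ x)) w)"
    and pumped: "\<forall>k. r @ concat (replicate k v) @ s @ concat (replicate k x) @ t \<in> L_cc"
    using pump[rule_format, of w "\<lambda>i. foldl shape_step Units (take i w)"] by blast
  then have "foldl shape_step Units (r @ v) = foldl shape_step Units r"
    "foldl shape_step Units (r @ v @ s @ x) = foldl shape_step Units (r @ v @ s)"
    unfolding w by simp_all
  with w \<open>v @ x \<noteq> []\<close> pumped show False
    using input_word_not_colour_pumpable[of N r v s x t] unfolding w_def by blast
qed

end
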